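(* Let $\mathscr E$ be a closed totally disconnected subset of $\mathbb S^2$, and let $\mathscr I$ be the set of all isolated points of $\mathscr E$. Assume $\mathscr I$ is infinite. If $\mathscr F$ is a finite subset of $\mathbb S^2\setminus\mathscr E$, then $\mathscr E\cup\mathscr F$ is homeomorphic to $\mathscr E$. *)

theory Defs
  imports "HOL-Analysis.Analysis"
begin

definition S2 :: "(real^3) set" where
  "S2 = sphere 0 1"

definition totally_disconnected :: "'a::topological_space set \<Rightarrow> bool" where
  "totally_disconnected S \<longleftrightarrow> (\<forall>C. C \<subseteq> S \<and> connected C \<longrightarrow> (\<exists>a. C \<subseteq> {a}))"

definition isolated_points :: "'a::topological_space set \<Rightarrow> 'a set" where
  "isolated_points S = {x \<in> S. \<not> x islimpt S}"

end

theory Submission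
  imports Defs
begin

text \<open>By compactness there is an injective sequence \<open>x\<close> of isolated points of \<open>E\<close>
  converging in \<open>E\<close>. A new point \<open>f \<notin> E\<close> is absorbed Hilbert-hotel style:
  \<open>f \<mapsto> x 0\<close>, \<open>x n \<mapsto> x (Suc n)\<close>, identity elsewhere. This bijection
  \<open>insert f E \<rightarrow> E\<close> is continuous because the points it moves are isolated and
  their displacement \<open>dist (x (Suc n)) (x n)\<close> tends to zero, and a continuous
  bijection from a compact space is a homeomorphism. The points of \<open>F\<close> are
  added one at a time.\<close>

definition hilbert_hotel :: "'a \<Rightarrow> (nat \<Rightarrow> 'a) \<Rightarrow> 'a \<Rightarrow> 'a" where
  "hilbert_hotel f x z = (if z = f then x 0 else if z \<in> range x then x (Suc (inv x z)) else z)"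

lemma hilbert_hotel_new [simp]: "hilbert_hotel f x f = x 0"
  by (simp add: hilbert_hotel_def)

lemma hilbert_hotel_seq [simp]:
  assumes "inj x" "f \<notin> range x"
  shows "hilbert_hotel f x (x n) = x (Suc n)"
  using assms by (auto simp: hilbert_hotel_def)

lemma hilbert_hotel_other [simp]:
  "z \<noteq> f \<Longrightarrow> z \<notin> range x \<Longrightarrow> hilbert_hotel f x z = z"
  by (simp add: hilbert_hotel_def)

lemma inj_hilbert_hotel:
  assumes "inj x" "f \<notin> range x"
  shows "inj (hilbert_hotel f x)"
proof (rule injI)
  fix a b assume eq: "hilbert_hotel f x a = hilbert_hotel f x b"
  have cases: "z = f \<or> (\<exists>n. z = x n) \<or> (z \<noteq> f \<and> z \<notin> range x)" for z
    by blast
  show "a = b"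
    using cases[of a] cases[of b] eq assms by (auto simp: inj_eq)
qed

lemma hilbert_hotel_image:
  assumes "inj x" "range x \<subseteq> E" "f \<notin> E"
  shows "hilbert_hotel f x ` insert f E = E"
proof -
  have fx: "f \<notin> range x" using assms by blast
  have "E \<subseteq> hilbert_hotel f x ` insert f E"
  proof
    fix w assume w: "w \<in> E"
    consider "w = x 0" | m where "w = x (Suc m)" | "w \<notin> range x"
      by (metis not0_implies_Suc rangeE)
    then show "w \<in> hilbert_hotel f x ` insert f E"
    proof cases
      case 1
      then show ?thesis by (metis hilbert_hotel_new insertI1 rev_image_eqI)
    next
      case 2
      then have "w = hilbert_hotel f x (x m)" using assms(1) fx by simp
      then show ?thesis using assms(2) by blast
    next
      case 3
      moreover have "w \<noteq> f" using w assms(3) by blast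
      ultimately have "w = hilbert_hotel f x w" by simp
      then show ?thesis using w by blast
    qed
  qed
  moreover have "hilbert_hotel f x ` insert f E \<subseteq> E"
    using assms fx by (auto simp: hilbert_hotel_def)
  ultimately show ?thesis by blast
qed

lemma tendsto_hilbert_hotel:
  fixes x :: "nat \<Rightarrow> 'a::metric_space"
  assumes "inj x" "f \<notin> range x"
    and small_steps: "(\<lambda>n. dist (x (Suc n)) (x n)) \<longlonglongrightarrow> 0"
  shows "(hilbert_hotel f x \<longlongrightarrow> z) (at z within S)"
proof (rule tendstoI)
  fix e :: real assume "e > 0"
  then have "eventually (\<lambda>m. dist (x (Suc m)) (x m) < e / 2) sequentially"
    using order_tendstoD(2)[OF small_steps, of "e / 2"] by simp
  then obtain N where N: "\<And>m. m \<ge> N \<Longrightarrow> dist (x (Suc m)) (x m) < e / 2"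
    unfolding eventually_sequentially by blast
  have "\<not> z islimpt insert f (x ` {..<N})" by (simp add: islimpt_finite)
  then have "eventually (\<lambda>y. y \<notin> insert f (x ` {..<N})) (at z within S)"
    by (simp add: islimpt_iff_eventually eventually_at_filter eventually_mono)
  moreover have "eventually (\<lambda>y. dist y z < e / 2) (at z within S)"
    using tendstoD[OF tendsto_ident_at, of "e / 2"] \<open>e > 0\<close> by simp
  ultimately show "eventually (\<lambda>y. dist (hilbert_hotel f x y) z < e) (at z within S)"
  proof eventually_elim
    case (elim y)
    show ?case
    proof (cases "y \<in> range x")
      case True
      then obtain m where m: "y = x m" by blast
      with elim have "m \<ge> N" by (auto simp: not_less)
      then have "dist (hilbert_hotel f x y) y < e / 2" using N m assms(1,2) by simp
      then show ?thesis using elim dist_triangle[of "hilbert_hotel f x y" z y] by linarith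
    next
      case False
      then show ?thesis using elim \<open>e > 0\<close> by auto
    qed
  qed
qed

text \<open>Continuity at the moved points is automatic, as they are isolated in \<open>insert f E\<close>.\<close>

lemma continuous_on_hilbert_hotel:
  fixes E :: "'a::metric_space set"
  assumes "closed E" "f \<notin> E" "inj x" "range x \<subseteq> E" "\<And>n. \<not> x n islimpt E"
    and "(\<lambda>n. dist (x (Suc n)) (x n)) \<longlonglongrightarrow> 0"
  shows "continuous_on (insert f E) (hilbert_hotel f x)"
  unfolding continuous_on_eq_continuous_within
proof
  fix z assume "z \<in> insert f E"
  have fx: "f \<notin> range x" using assms(2,4) by blast
  show "continuous (at z within insert f E) (hilbert_hotel f x)"
  proof (cases "z islimpt insert f E")
    case False
    then show ?thesis by (simp add: continuous_within trivial_limit_within[symmetric])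
  next
    case True
    then have "z \<noteq> f" "z \<notin> range x"
      using assms(1,2,5) by (auto simp: islimpt_insert closed_limpt)
    then show ?thesis
      using tendsto_hilbert_hotel[OF assms(3) fx assms(6)] by (simp add: continuous_within)
  qed
qed

lemma homeomorphic_insert_hilbert_hotel:
  fixes E :: "'a::metric_space set"
  assumes "compact E" "f \<notin> E" "inj x" "range x \<subseteq> E" "\<And>n. \<not> x n islimpt E"
    and "(\<lambda>n. dist (x (Suc n)) (x n)) \<longlonglongrightarrow> 0"
  shows "insert f E homeomorphic E"
proof -
  have "f \<notin> range x" using assms(2,4) by blast
  have "compact (insert f E)" using assms(1) by simp
  moreover have "continuous_on (insert f E) (hilbert_hotel f x)"
    using assms compact_imp_closed by (intro continuous_on_hilbert_hotel) auto
  moreover have "hilbert_hotel f x ` insert f E = E"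
    using assms(3,4,2) by (rule hilbert_hotel_image)
  moreover have "inj_on (hilbert_hotel f x) (insert f E)"
    using inj_hilbert_hotel[OF assms(3) \<open>f \<notin> range x\<close>] by (rule inj_on_subset) simp
  ultimately have "\<exists>g. homeomorphism (insert f E) E (hilbert_hotel f x) g"
    by (rule homeomorphism_compact)
  then show ?thesis unfolding homeomorphic_def by blast
qed

lemma convergent_seq_of_isolated_points:
  fixes E :: "'a::metric_space set"
  assumes "compact E" "infinite (isolated_points E)"
  obtains x p where "inj x" "range x \<subseteq> isolated_points E" "x \<longlonglongrightarrow> p"
proof -
  obtain y :: "nat \<Rightarrow> 'a" where y: "inj y" "range y \<subseteq> isolated_points E"
    using infinite_countable_subset[OF assms(2)] by blast
  then have "\<forall>n. y n \<in> E" by (auto simp: isolated_points_def)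
  then obtain p r where "strict_mono r" "(y \<circ> r) \<longlonglongrightarrow> p"
    using compact_imp_seq_compact[OF assms(1)] seq_compactE by metis
  moreover have "inj (y \<circ> r)"
    using y(1) strict_mono_imp_inj_on[OF \<open>strict_mono r\<close>] by (simp add: inj_compose)
  ultimately show thesis using that y(2) by fastforce
qed

lemma homeomorphic_insert_compact:
  fixes E :: "'a::metric_space set"
  assumes "compact E" "infinite (isolated_points E)" "f \<notin> E"
  shows "insert f E homeomorphic E"
proof -
  obtain x p where x: "inj x" "range x \<subseteq> isolated_points E" "x \<longlonglongrightarrow> p"
    using convergent_seq_of_isolated_points assms(1,2) .
  have "(\<lambda>n. dist (x (Suc n)) (x n)) \<longlonglongrightarrow> dist p p"
    using tendsto_dist[OF LIMSEQ_Suc[OF x(3)] x(3)] .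
  then show ?thesis
    using x(1,2) assms by (intro homeomorphic_insert_hilbert_hotel) (auto simp: isolated_points_def)
qed

lemma isolated_points_mono_finite:
  fixes E :: "'a::t1_space set"
  assumes "finite F"
  shows "isolated_points E \<subseteq> isolated_points (E \<union> F)"
  using assms by (auto simp: isolated_points_def islimpt_Un islimpt_finite)

lemma homeomorphic_Un_finite_compact:
  fixes E :: "'a::metric_space set"
  assumes "compact E" "infinite (isolated_points E)" "finite F" "F \<inter> E = {}"
  shows "(E \<union> F) homeomorphic E"
  using assms(3,4)
proof (induction F rule: finite_induct)
  case empty
  then show ?case by (simp add: homeomorphic_refl)
next
  case (insert f F)
  have "compact (E \<union> F)" using assms(1) insert(1) by (simp add: finite_imp_compact compact_Un)
  moreover have "infinite (isolated_points (E \<union> F))"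
    using assms(2) isolated_points_mono_finite[OF insert(1)] finite_subset by blast
  ultimately have "insert f (E \<union> F) homeomorphic (E \<union> F)"
    using insert by (intro homeomorphic_insert_compact) auto
  then show ?case using insert homeomorphic_trans by fastforce
qed

theorem lemma3p7:
  fixes E F :: "(real^3) set"
  assumes "E \<subseteq> S2"
    and "closedin (top_of_set S2) E"
    and "totally_disconnected E"
    and "infinite (isolated_points E)"
    and "finite F"
    and "F \<subseteq> S2 - E"
  shows "(E \<union> F) homeomorphic E"
proof -
  have "closed E" using closedin_closed_trans[OF assms(2)] by (simp add: S2_def)
  moreover have "bounded E" using assms(1) bounded_subset[OF bounded_sphere] by (auto simp: S2_def)
  ultimately have "compact E" by (simp add: compact_eq_bounded_closed)
  then show ?thesis using homeomorphic_Un_finite_compact assms(4-6) by blast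
qed

end
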